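(* Let $a,b,c,d\ge0$ with $a+b+c+d=1$, and let $$C=\begin{pmatrix}a&b&c&d\\ d&a&b&c\\ c&d&a&b\\ b&c&d&a\end{pmatrix}.$$ If $C$ is bracelet, then $C$ is unistochastic.
   Context: A bistochastic $N\times N$ matrix $B$ (nonnegative entries, all row and column sums equal to 1) is bracelet if for all $k,l\in\{1,\dots,N\}$ both $2\max_j\sqrt{B_{lj}B_{kj}}\le\sum_{j=1}^N\sqrt{B_{lj}B_{kj}}$ and $2\max_j\sqrt{B_{jk}B_{jl}}\le\sum_{j=1}^N\sqrt{B_{jk}B_{jl}}$. It is unistochastic if there is a unitary $U$ with $B_{ij}=|U_{ij}|^2$ for all $i,j$. *)

theory Defs
  imports "HOL-Analysis.Analysis"
begin

text \<open>N x N matrices are represented as functions nat => nat => _ with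
  indices ranging over {0..<N}.\<close>

definition bistochastic :: "nat \<Rightarrow> (nat \<Rightarrow> nat \<Rightarrow> real) \<Rightarrow> bool" where
  "bistochastic N B \<longleftrightarrow>
     (\<forall>i<N. \<forall>j<N. B i j \<ge> 0) \<and>
     (\<forall>i<N. (\<Sum>j<N. B i j) = 1) \<and>
     (\<forall>j<N. (\<Sum>i<N. B i j) = 1)"

definition bracelet :: "nat \<Rightarrow> (nat \<Rightarrow> nat \<Rightarrow> real) \<Rightarrow> bool" where
  "bracelet N B \<longleftrightarrow> bistochastic N B \<and>
     (\<forall>k<N. \<forall>l<N.
        2 * Max ((\<lambda>j. sqrt (B l j * B k j)) ` {..<N}) \<le> (\<Sum>j<N. sqrt (B l j * B k j)) \<and>
        2 * Max ((\<lambda>j. sqrt (B j k * B j l)) ` {..<N}) \<le> (\<Sum>j<N. sqrt (B j k * B j l)))"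

definition unitary_mat :: "nat \<Rightarrow> (nat \<Rightarrow> nat \<Rightarrow> complex) \<Rightarrow> bool" where
  "unitary_mat N U \<longleftrightarrow>
     (\<forall>i<N. \<forall>k<N. (\<Sum>j<N. U i j * cnj (U k j)) = (if i = k then 1 else 0))"

definition unistochastic :: "nat \<Rightarrow> (nat \<Rightarrow> nat \<Rightarrow> real) \<Rightarrow> bool" where
  "unistochastic N B \<longleftrightarrow>
     (\<exists>U. unitary_mat N U \<and> (\<forall>i<N. \<forall>j<N. B i j = (cmod (U i j))\<^sup>2))"

text \<open>The 4x4 circulant matrix with first row (a,b,c,d): entry (i,j) is the
  ((j - i) mod 4)-th element of [a,b,c,d].\<close>
definition circ4 :: "real \<Rightarrow> real \<Rightarrow> real \<Rightarrow> real \<Rightarrow> nat \<Rightarrow> nat \<Rightarrow> real" where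
  "circ4 a b c d i j = [a, b, c, d] ! ((j + 4 - i mod 4) mod 4)"

end

theory Submission
  imports Defs
begin

text \<open>Write \<open>a = x\<^sup>2, b = y\<^sup>2, c = z\<^sup>2, d = w\<^sup>2\<close>. The bracelet condition for rows 0 and 1 says that
  \<open>xy, yz, zw, wx\<close> are the sides of a (possibly degenerate) quadrilateral, which amounts to
  \<open>\<bar>x(y\<^sup>2 + w\<^sup>2) - \<bar>z(w\<^sup>2 - y\<^sup>2)\<bar>\<bar> \<le> 2xyw\<close>. An explicit family of unitaries with two phases
  already has the moduli of the circulant in rows 0 and 2 and columns 0 and 2; with the phases
  \<open>u = \<i>\<omega>, q = -\<i>\<omega>\<close> the diagonal entries (1,1) and (3,3) have modulus
  \<open>\<bar>z(w\<^sup>2 - y\<^sup>2) - 2xyw Im \<omega>\<bar> / (y\<^sup>2 + w\<^sup>2)\<close>, and the quadrilateral inequality is exactly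
  what allows choosing \<open>\<omega>\<close> on the unit circle so that this equals \<open>x\<close>. The two remaining
  entries are then forced by the normalisation of rows 1 and 3. If \<open>y = w = 0\<close> the circulant
  is a direct sum of two \<open>2\<times>2\<close> blocks, each unistochastic via a rotation.\<close>

lemma sum_lessThan_4: "(\<Sum>j<(4::nat). f j) = f 0 + f 1 + f 2 + f 3"
  by (simp add: numeral_eq_Suc lessThan_Suc ac_simps)

lemma all_lessThan_4: "(\<forall>i<(4::nat). P i) \<longleftrightarrow> P 0 \<and> P 1 \<and> P 2 \<and> P 3"
  by (auto simp: numeral_eq_Suc less_Suc_eq)

lemma unitary_mat_row_norm:
  assumes "unitary_mat N U" "i < N"
  shows "(\<Sum>j<N. (cmod (U i j))\<^sup>2) = 1"
proof -
  have "(\<Sum>j<N. U i j * cnj (U i j)) = 1" using assms unfolding unitary_mat_def by auto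
  then have "(\<Sum>j<N. complex_of_real ((cmod (U i j))\<^sup>2)) = 1"
    by (simp only: complex_norm_square)
  then have "complex_of_real (\<Sum>j<N. (cmod (U i j))\<^sup>2) = 1" by simp
  then show ?thesis using of_real_eq_1_iff by blast
qed

lemma abs_diff_mult_attains:
  fixes v p r :: real
  assumes "p \<ge> 0" "r \<ge> 0" "\<bar>r - \<bar>v\<bar>\<bar> \<le> p"
  shows "\<exists>s\<in>{-1..1}. \<bar>v - p * s\<bar> = r"
proof (cases "p = 0")
  case True
  then show ?thesis using assms by force
next
  case False
  define \<sigma> :: real where "\<sigma> = (if v < 0 then -1 else 1)"
  define s where "s = (v - \<sigma> * r) / p"
  have "\<bar>v - \<sigma> * r\<bar> \<le> p"
    using assms unfolding \<sigma>_def by (auto simp: abs_le_iff abs_if split: if_splits)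
  then have "s \<in> {-1..1}" using False assms(1) by (auto simp: s_def abs_le_iff field_simps)
  moreover have "\<bar>v - p * s\<bar> = r" using False assms(2) by (simp add: s_def \<sigma>_def)
  ultimately show ?thesis by blast
qed

lemma quadrilateral_bound_ordered:
  fixes x y z w :: real
  assumes "0 \<le> y" "y \<le> w"
    and "z*w \<le> x*y + y*z + w*x" "w*x \<le> x*y + y*z + z*w"
  shows "\<bar>x*(y\<^sup>2 + w\<^sup>2) - z*(w\<^sup>2 - y\<^sup>2)\<bar> \<le> 2*x*y*w"
proof -
  have "x*(w-y) \<le> z*(w+y)" "z*(w-y) \<le> x*(w+y)"
    using assms(3,4) by (simp_all add: algebra_simps)
  then have "x*(w-y)*(w-y) \<le> z*(w+y)*(w-y)" "z*(w-y)*(w+y) \<le> x*(w+y)*(w+y)"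
    using assms(1,2) by (simp_all add: mult_right_mono)
  then show ?thesis by (simp add: abs_le_iff power2_eq_square algebra_simps)
qed

lemma quadrilateral_bound:
  fixes x y z w :: real
  assumes "y \<ge> 0" "z \<ge> 0" "w \<ge> 0"
    and "x*y \<le> y*z + z*w + w*x" "y*z \<le> x*y + z*w + w*x"
    and "z*w \<le> x*y + y*z + w*x" "w*x \<le> x*y + y*z + z*w"
  shows "\<bar>x*(y\<^sup>2 + w\<^sup>2) - \<bar>z*(w\<^sup>2 - y\<^sup>2)\<bar>\<bar> \<le> 2*x*y*w"
proof (cases "y \<le> w")
  case True
  then have "\<bar>z*(w\<^sup>2 - y\<^sup>2)\<bar> = z*(w\<^sup>2 - y\<^sup>2)" using assms by (simp add: power_mono)
  then show ?thesis
    using quadrilateral_bound_ordered[where x = x and y = y and z = z and w = w] True assms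
    by simp
next
  case False
  then have "w\<^sup>2 \<le> y\<^sup>2" using assms by (simp add: power_mono)
  then have "\<bar>z*(w\<^sup>2 - y\<^sup>2)\<bar> = z*(y\<^sup>2 - w\<^sup>2)" using assms by (simp add: abs_mult)
  then show ?thesis
    using quadrilateral_bound_ordered[where x = x and y = w and z = z and w = y] False assms
    by (simp add: ac_simps)
qed

lemma bracelet_circ4_quadrilateral:
  fixes x y z w :: real
  assumes "x \<ge> 0" "y \<ge> 0" "z \<ge> 0" "w \<ge> 0"
    and "bracelet 4 (circ4 (x\<^sup>2) (y\<^sup>2) (z\<^sup>2) (w\<^sup>2))"
  shows "x*y \<le> y*z + z*w + w*x" "y*z \<le> x*y + z*w + w*x"
    and "z*w \<le> x*y + y*z + w*x" "w*x \<le> x*y + y*z + z*w"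
proof -
  define C where "C = circ4 (x\<^sup>2) (y\<^sup>2) (z\<^sup>2) (w\<^sup>2)"
  define g where "g j = sqrt (C 1 j * C 0 j)" for j
  define M where "M = Max (g ` {..<4})"
  have g: "g 0 = w*x" "g 1 = x*y" "g 2 = y*z" "g 3 = z*w"
    using assms(1-4) by (simp_all add: g_def C_def circ4_def real_sqrt_mult)
  have "2 * M \<le> (\<Sum>j<4. g j)"
    using assms(5)[unfolded bracelet_def, THEN conjunct2, rule_format, of 0 1]
    unfolding M_def g_def C_def by simp
  then have "2 * M \<le> w*x + x*y + y*z + z*w"
    unfolding sum_lessThan_4 g .
  moreover have "w*x \<le> M" "x*y \<le> M" "y*z \<le> M" "z*w \<le> M"
    unfolding M_def g[symmetric] by (auto intro: Max_ge)
  ultimately show "x*y \<le> y*z + z*w + w*x" "y*z \<le> x*y + z*w + w*x"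
      "z*w \<le> x*y + y*z + w*x" "w*x \<le> x*y + y*z + z*w"
    by linarith+
qed

text \<open>Rows 0 and 2 have the moduli of rows 0 and 2 of the circulant (for unimodular \<open>u, q\<close>);
  rows 1 and 3 complete them to an orthonormal basis, and their entries in columns 0 and 2 again
  have the circulant's moduli.\<close>

definition circ4_unitary ::
    "complex \<Rightarrow> complex \<Rightarrow> complex \<Rightarrow> complex \<Rightarrow> complex \<Rightarrow> complex \<Rightarrow> nat \<Rightarrow> nat \<Rightarrow> complex" where
  "circ4_unitary X Y Z W u q =
    (let B = Y*Y + W*W
     in (\<lambda>i j. [[X, Y, Z, W],
       [W, -(X*Y*W + W*W*Z*u + Y*Y*Z*q - X*Y*W*u*q)/B, Y*q,
           -(W*W*X - Y*Z*W*u + Y*Z*W*q + Y*Y*X*u*q)/B],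
       [Z, W*u, -X, -Y*u],
       [-Y, -(-Y*Y*X - Y*Z*W*u + Y*Z*W*q - W*W*X*u*q)/B, W*q,
           -(-X*Y*W + Y*Y*Z*u + W*W*Z*q + X*Y*W*u*q)/B]] ! i ! j))"

lemma unitary_mat_circ4_unitary:
  assumes real: "cnj X = X" "cnj Y = Y" "cnj Z = Z" "cnj W = W"
    and norm: "X*X + Y*Y + Z*Z + W*W = 1" and B0: "Y*Y + W*W \<noteq> 0"
    and unit: "u * cnj u = 1" "q * cnj q = 1"
  shows "unitary_mat 4 (circ4_unitary X Y Z W u q)"
proof -
  define B where "B = Y*Y + W*W"
  have "cnj B = B" using real by (simp add: B_def)
  show ?thesis
    unfolding unitary_mat_def all_lessThan_4 sum_lessThan_4 circ4_unitary_def Let_def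
      B_def[symmetric]
    apply (simp add: real \<open>cnj B = B\<close>)
    apply (intro conjI)
    apply (simp_all add: field_simps B0[folded B_def])
    using norm B_def unit by algebra+
qed

lemma circ4_unitary_1_1:
  assumes "\<omega> * cnj \<omega> = 1"
  shows "circ4_unitary X Y Z W (\<i>*\<omega>) (-\<i>*\<omega>) 1 1
    = -\<i> * \<omega> * (Z*(W*W - Y*Y) - 2*X*Y*W * of_real (Im \<omega>)) / (Y*Y + W*W)"
proof -
  have "\<omega> - cnj \<omega> = 2 * \<i> * of_real (Im \<omega>)"
    by (simp add: complex_diff_cnj)
  with assms have "-(X*Y*W + W*W*Z*(\<i>*\<omega>) + Y*Y*Z*(-\<i>*\<omega>) - X*Y*W*(\<i>*\<omega>)*(-\<i>*\<omega>))
    = -\<i> * \<omega> * (Z*(W*W - Y*Y) - 2*X*Y*W * of_real (Im \<omega>))"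
    using complex_i_mult_minus[of 1] by algebra
  then show ?thesis
    unfolding circ4_unitary_def Let_def by simp
qed

lemma circ4_unitary_3_3:
  "circ4_unitary X Y Z W (\<i>*\<omega>) (-\<i>*\<omega>) 3 3
    = - circ4_unitary X Y Z W (\<i>*\<omega>) (-\<i>*\<omega>) 1 1"
  by (simp add: circ4_unitary_def Let_def divide_simps)

lemma unistochastic_circ4_squares:
  fixes x y z w s :: real
  assumes nonneg: "x \<ge> 0" "y \<ge> 0" "z \<ge> 0" "w \<ge> 0"
    and norm: "x\<^sup>2 + y\<^sup>2 + z\<^sup>2 + w\<^sup>2 = 1" and B0: "y\<^sup>2 + w\<^sup>2 \<noteq> 0"
    and s: "s \<in> {-1..1}" and phase: "\<bar>z*(w\<^sup>2 - y\<^sup>2) - 2*x*y*w * s\<bar> = x*(y\<^sup>2 + w\<^sup>2)"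
  shows "unistochastic 4 (circ4 (x\<^sup>2) (y\<^sup>2) (z\<^sup>2) (w\<^sup>2))"
proof -
  define C where "C = circ4 (x\<^sup>2) (y\<^sup>2) (z\<^sup>2) (w\<^sup>2)"
  define \<omega> where "\<omega> = cis (arcsin s)"
  define U where
    "U = circ4_unitary (of_real x) (of_real y) (of_real z) (of_real w) (\<i>*\<omega>) (-\<i>*\<omega>)"
  have \<omega>: "\<omega> * cnj \<omega> = 1" "cmod \<omega> = 1" "Im \<omega> = s"
    using s by (simp_all add: \<omega>_def complex_norm_square[symmetric])
  have "(\<i>*\<omega>) * cnj (\<i>*\<omega>) = 1" "(-\<i>*\<omega>) * cnj (-\<i>*\<omega>) = 1"
    using \<omega>(2)
    by (simp_all only: complex_norm_square[symmetric] norm_mult norm_minus_cancel) simp_all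
  then have unit: "unitary_mat 4 U"
    unfolding U_def using norm B0
    by (intro unitary_mat_circ4_unitary)
      (simp_all add: power2_eq_square flip: of_real_mult of_real_add)
  have "U 1 1 = -\<i>*\<omega> * of_real (z*(w\<^sup>2 - y\<^sup>2) - 2*x*y*w * s) / of_real (y\<^sup>2 + w\<^sup>2)"
    unfolding U_def circ4_unitary_1_1[OF \<omega>(1)] \<omega>(3) by (simp add: power2_eq_square)
  then have "cmod (U 1 1) = \<bar>z*(w\<^sup>2 - y\<^sup>2) - 2*x*y*w * s\<bar> / \<bar>y\<^sup>2 + w\<^sup>2\<bar>"
    by (simp only: norm_divide norm_mult norm_minus_cancel norm_of_real norm_ii \<omega>(2) mult_1_left)
  also have "\<dots> = x"
    using phase B0 by simp
  finally have "cmod (U 1 1) = x" .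
  then have "cmod (U 3 3) = x"
    unfolding U_def circ4_unitary_3_3 by simp
  have outer: "\<forall>j<4. (cmod (U 0 j))\<^sup>2 = C 0 j \<and> (cmod (U 2 j))\<^sup>2 = C 2 j
      \<and> (cmod (U j 0))\<^sup>2 = C j 0 \<and> (cmod (U j 2))\<^sup>2 = C j 2"
    using nonneg \<omega>(2)
    by (simp add: all_lessThan_4 C_def U_def circ4_unitary_def Let_def circ4_def norm_mult)
  have diag: "(cmod (U 1 1))\<^sup>2 = C 1 1" "(cmod (U 3 3))\<^sup>2 = C 3 3"
    using \<open>cmod (U 1 1) = x\<close> \<open>cmod (U 3 3) = x\<close> by (simp_all add: C_def circ4_def)
  have "(cmod (U 1 3))\<^sup>2 = C 1 3" "(cmod (U 3 1))\<^sup>2 = C 3 1"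
    using unitary_mat_row_norm[OF unit, of 1] unitary_mat_row_norm[OF unit, of 3] outer diag norm
    by (simp_all add: sum_lessThan_4 all_lessThan_4 C_def circ4_def)
  with outer diag unit show ?thesis
    unfolding unistochastic_def C_def[symmetric] all_lessThan_4 by metis
qed

lemma unistochastic_circ4_two_blocks:
  fixes x z :: real
  assumes "x \<ge> 0" "z \<ge> 0" "x\<^sup>2 + z\<^sup>2 = 1"
  shows "unistochastic 4 (circ4 (x\<^sup>2) 0 (z\<^sup>2) 0)"
proof -
  define X Z where "X = complex_of_real x" "Z = complex_of_real z"
  define U where "U = (\<lambda>i j. [[X, 0, Z, 0], [0, X, 0, Z], [Z, 0, -X, 0], [0, Z, 0, -X]] ! i ! j)"
  have "X*X + Z*Z = 1"
    using assms(3) unfolding X_Z_def power2_eq_square by (simp flip: of_real_mult of_real_add)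
  then have "unitary_mat 4 U"
    by (simp add: unitary_mat_def all_lessThan_4 sum_lessThan_4 U_def X_Z_def ac_simps)
  moreover have "\<forall>i<4. \<forall>j<4. circ4 (x\<^sup>2) 0 (z\<^sup>2) 0 i j = (cmod (U i j))\<^sup>2"
    using assms(1,2) by (simp add: all_lessThan_4 U_def X_Z_def circ4_def)
  ultimately show ?thesis
    unfolding unistochastic_def by blast
qed

theorem mainTheorem7:
  fixes a b c d :: real
  assumes "a \<ge> 0" "b \<ge> 0" "c \<ge> 0" "d \<ge> 0" "a + b + c + d = 1"
    and "bracelet 4 (circ4 a b c d)"
  shows "unistochastic 4 (circ4 a b c d)"
proof -
  define x y z w where "x = sqrt a" "y = sqrt b" "z = sqrt c" "w = sqrt d"
  have nonneg: "x \<ge> 0" "y \<ge> 0" "z \<ge> 0" "w \<ge> 0"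
    using assms(1-4) by (simp_all add: x_y_z_w_def)
  have squares: "a = x\<^sup>2" "b = y\<^sup>2" "c = z\<^sup>2" "d = w\<^sup>2"
    using assms(1-4) by (simp_all add: x_y_z_w_def)
  note quadrilateral = bracelet_circ4_quadrilateral[OF nonneg assms(6)[unfolded squares]]
  show ?thesis
  proof (cases "y\<^sup>2 + w\<^sup>2 = 0")
    case True
    then have "y = 0" "w = 0" by (simp_all add: sum_power2_eq_zero_iff)
    then show ?thesis
      using unistochastic_circ4_two_blocks[of x z] nonneg assms(5) by (simp add: squares)
  next
    case False
    have "2*x*y*w \<ge> 0" "x*(y\<^sup>2 + w\<^sup>2) \<ge> 0"
      using nonneg by simp_all
    then obtain s where "s \<in> {-1..1}" "\<bar>z*(w\<^sup>2 - y\<^sup>2) - 2*x*y*w * s\<bar> = x*(y\<^sup>2 + w\<^sup>2)"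
      using abs_diff_mult_attains quadrilateral_bound[OF nonneg(2-4) quadrilateral] by blast
    then show ?thesis
      using unistochastic_circ4_squares[OF nonneg _ False] assms(5) by (simp add: squares)
  qed
qed

end
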